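(* Let $J'\subseteq J$ be nonempty, $t_o\in[0,T-\sum_{j\in J'}p_j]$, and let $\alpha$, $c_1<\dots<c_m$, $M$ and $B_\alpha$ be as in the context. Let $1\le q<m$, $J_l=\{j\in J'\setminus\{\alpha\}:M(j)\le q\}$, $J_r=\{j\in J':M(j)>q\}$ and $s=t_o+\sum_{j\in J_l}p_j$. If $c_q\le s<c_{q+1}$ and $s\notin B_\alpha$, then there exists a partial potential schedule of $J'$ starting at $t_o$ in which all jobs of $J_l$ are processed before $\alpha$, job $\alpha$ starts at time $s$, and all jobs of $J_r$ are processed after $\alpha$.
   Context: $J$ is a finite set of jobs; job $j$ has processing time $p_j>0$ and weight $w_j>0$; $T=\sum_{j\in J}p_j$. For $J'\subseteq J$ and $t_o\ge0$, a partial schedule of $J'$ starting at $t_o$ is an ordering of $J'$ processed consecutively without idle time from time $t_o$; job $j$ has (absolute) start time $t_j$. For $t\ge 0$, $\varphi_j(t)=\frac{w_j}{p_j(p_j+t)}$. For jobs $i,j$ with $w_ip_j\neq w_jp_i$, $t^*_{ij}=\frac{w_jp_i^2-w_ip_j^2}{w_ip_j-w_jp_i}$ (the unique real $t$ with $\varphi_i(t)=\varphi_j(t)$). Dominance rule: for an interval $I\subseteq[0,\infty)$, the relation "$i$ dominates $j$ on $I$" is violated by a (partial) schedule if $j$ is processed before $i$ and both $t_j\in I$ and $t_i-p_j\in I$. The rule contains, for each pair of distinct jobs $i,j$ with $(p_i,w_i)\ne(p_j,w_j)$: (1) if $\varphi_i(t)\ge\varphi_j(t)$ for all $t\ge 0$,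 "$i$ dominates $j$ on $[0,\infty)$"; (2) otherwise, if $\varphi_j(t)\ge\varphi_i(t)$ for all $t\ge0$, "$j$ dominates $i$ on $[0,\infty)$"; (3) otherwise, labelling the pair so that $\varphi_i(0)>\varphi_j(0)$, $t^*_{ij}>0$ is defined and the rule contains "$i$ dominates $j$ on $[0,t^*_{ij})$" and "$j$ dominates $i$ on $[t^*_{ij},\infty)$". A partial schedule of $J'$ is a partial potential schedule if it violates no relation of the rule between two jobs of $J'$. Banned set: for $i\in J$, $B_i$ is the union over all $j\in J\setminus\{i\}$ with $\varphi_i(0)>\varphi_j(0)$, $w_ip_j\ne w_jp_i$ and $t^*_{ij}\in(0,T)$ of the intervals $[t^*_{ij},t^*_{ij}+p_j)$. Subproblem data: $t_e=t_o+\sum_{j\in J'}p_j$; $\alpha\in J'$ maximizes $\varphi_i(t_o)$ over $i\in J'$, ties broken in favour of maximum $\varphi_i(t_e)$; for $j\in J'\setminus\{\alpha\}$ with $t^*_{\alpha j}$ defined, $c_{\alpha j}=t^*_{\alpha j}+p_j$; $C=\{c_{\alpha j}: j\in J'\setminus\{\alpha\},\ t^*_{\alpha j}\text{ defined},\ c_{\alpha j}\in(t_o,t_e)\}\cup\{t_o,t_e\}$ with distinct elements $t_o=c_1<\dots<c_m=t_e$; $M(\alpha)=1$, and for $j\neq\alpha$, $M(j)=r$ if $t^*_{\alpha j}$ is defined, $t^*_{\alpha j}\in(t_o,t_e)$ and $c_{\alpha j}=c_r$ for some $r\le m$, and $M(j)=|J'|+1$ otherwise. *)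

theory Defs
  imports Main "HOL.Real"
begin

text \<open>Jobs have type 'a; processing times p and weights w are functions 'a => real.
A (partial) schedule is a list of jobs, processed consecutively from time t0.\<close>

definition phi :: "('a \<Rightarrow> real) \<Rightarrow> ('a \<Rightarrow> real) \<Rightarrow> 'a \<Rightarrow> real \<Rightarrow> real" where
  "phi p w j t = w j / (p j * (p j + t))"

definition tstar :: "('a \<Rightarrow> real) \<Rightarrow> ('a \<Rightarrow> real) \<Rightarrow> 'a \<Rightarrow> 'a \<Rightarrow> real" where
  "tstar p w i j = (w j * (p i)^2 - w i * (p j)^2) / (w i * p j - w j * p i)"

text \<open>The dominance rule for the job set J: rule_dom p w J i j I holds iff
the rule contains the relation "i dominates j on I".\<close>
definition rule_dom :: "('a \<Rightarrow> real) \<Rightarrow> ('a \<Rightarrow> real) \<Rightarrow> 'a set \<Rightarrow> 'a \<Rightarrow> 'a \<Rightarrow> real set \<Rightarrow> bool" where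
  "rule_dom p w J i j I \<longleftrightarrow>
     i \<in> J \<and> j \<in> J \<and> i \<noteq> j \<and> (p i, w i) \<noteq> (p j, w j) \<and>
     ( ((\<forall>t\<ge>0. phi p w i t \<ge> phi p w j t) \<and> I = {0..})
     \<or> (\<not> (\<forall>t\<ge>0. phi p w i t \<ge> phi p w j t) \<and> \<not> (\<forall>t\<ge>0. phi p w j t \<ge> phi p w i t) \<and>
          phi p w i 0 > phi p w j 0 \<and> I = {0..<tstar p w i j})
     \<or> (\<not> (\<forall>t\<ge>0. phi p w i t \<ge> phi p w j t) \<and> \<not> (\<forall>t\<ge>0. phi p w j t \<ge> phi p w i t) \<and>
          phi p w j 0 > phi p w i 0 \<and> I = {tstar p w j i..}))"

definition start_at :: "('a \<Rightarrow> real) \<Rightarrow> real \<Rightarrow> 'a list \<Rightarrow> nat \<Rightarrow> real" where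
  "start_at p t0 \<sigma> k = t0 + sum_list (map p (take k \<sigma>))"

definition before :: "'a list \<Rightarrow> 'a \<Rightarrow> 'a \<Rightarrow> bool" where
  "before \<sigma> x y \<longleftrightarrow> (\<exists>k l. k < l \<and> l < length \<sigma> \<and> \<sigma> ! k = x \<and> \<sigma> ! l = y)"

definition violates :: "('a \<Rightarrow> real) \<Rightarrow> real \<Rightarrow> 'a list \<Rightarrow> 'a \<Rightarrow> 'a \<Rightarrow> real set \<Rightarrow> bool" where
  "violates p t0 \<sigma> i j I \<longleftrightarrow>
     (\<exists>k l. k < l \<and> l < length \<sigma> \<and> \<sigma> ! k = j \<and> \<sigma> ! l = i \<and>
            start_at p t0 \<sigma> k \<in> I \<and> start_at p t0 \<sigma> l - p j \<in> I)"

definition partial_schedule :: "'a set \<Rightarrow> 'a list \<Rightarrow> bool" where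
  "partial_schedule J' \<sigma> \<longleftrightarrow> distinct \<sigma> \<and> set \<sigma> = J'"

definition partial_potential_schedule ::
  "('a \<Rightarrow> real) \<Rightarrow> ('a \<Rightarrow> real) \<Rightarrow> 'a set \<Rightarrow> 'a set \<Rightarrow> real \<Rightarrow> 'a list \<Rightarrow> bool" where
  "partial_potential_schedule p w J J' t0 \<sigma> \<longleftrightarrow>
     partial_schedule J' \<sigma> \<and>
     (\<forall>i\<in>J'. \<forall>j\<in>J'. \<forall>I. rule_dom p w J i j I \<longrightarrow> \<not> violates p t0 \<sigma> i j I)"

definition banned :: "('a \<Rightarrow> real) \<Rightarrow> ('a \<Rightarrow> real) \<Rightarrow> 'a set \<Rightarrow> 'a \<Rightarrow> real set" where
  "banned p w J i = \<Union> {{tstar p w i j ..< tstar p w i j + p j} | j.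
      j \<in> J - {i} \<and> phi p w i 0 > phi p w j 0 \<and> w i * p j \<noteq> w j * p i \<and>
      tstar p w i j \<in> {0<..<sum p J}}"

definition t_end :: "('a \<Rightarrow> real) \<Rightarrow> 'a set \<Rightarrow> real \<Rightarrow> real" where
  "t_end p J' t0 = t0 + sum p J'"

definition is_alpha :: "('a \<Rightarrow> real) \<Rightarrow> ('a \<Rightarrow> real) \<Rightarrow> 'a set \<Rightarrow> real \<Rightarrow> 'a \<Rightarrow> bool" where
  "is_alpha p w J' t0 a \<longleftrightarrow> a \<in> J' \<and>
     (\<forall>i\<in>J'. phi p w i t0 \<le> phi p w a t0 \<and>
        (phi p w i t0 = phi p w a t0 \<longrightarrow> phi p w i (t_end p J' t0) \<le> phi p w a (t_end p J' t0)))"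

definition tstar_defined :: "('a \<Rightarrow> real) \<Rightarrow> ('a \<Rightarrow> real) \<Rightarrow> 'a \<Rightarrow> 'a \<Rightarrow> bool" where
  "tstar_defined p w i j \<longleftrightarrow> w i * p j \<noteq> w j * p i"

definition c_val :: "('a \<Rightarrow> real) \<Rightarrow> ('a \<Rightarrow> real) \<Rightarrow> 'a \<Rightarrow> 'a \<Rightarrow> real" where
  "c_val p w a j = tstar p w a j + p j"

definition Cset :: "('a \<Rightarrow> real) \<Rightarrow> ('a \<Rightarrow> real) \<Rightarrow> 'a set \<Rightarrow> real \<Rightarrow> 'a \<Rightarrow> real set" where
  "Cset p w J' t0 a =
     {c_val p w a j | j. j \<in> J' - {a} \<and> tstar_defined p w a j \<and>
         c_val p w a j \<in> {t0<..<t_end p J' t0}} \<union> {t0, t_end p J' t0}"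

definition m_card :: "('a \<Rightarrow> real) \<Rightarrow> ('a \<Rightarrow> real) \<Rightarrow> 'a set \<Rightarrow> real \<Rightarrow> 'a \<Rightarrow> nat" where
  "m_card p w J' t0 a = card (Cset p w J' t0 a)"

text \<open>c r for r = 1..m: the r-th smallest element of C (1-based).\<close>
definition cseq :: "('a \<Rightarrow> real) \<Rightarrow> ('a \<Rightarrow> real) \<Rightarrow> 'a set \<Rightarrow> real \<Rightarrow> 'a \<Rightarrow> nat \<Rightarrow> real" where
  "cseq p w J' t0 a r = sorted_list_of_set (Cset p w J' t0 a) ! (r - 1)"

definition Mfun :: "('a \<Rightarrow> real) \<Rightarrow> ('a \<Rightarrow> real) \<Rightarrow> 'a set \<Rightarrow> real \<Rightarrow> 'a \<Rightarrow> 'a \<Rightarrow> nat" where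
  "Mfun p w J' t0 a j =
     (if j = a then 1
      else if tstar_defined p w a j \<and> tstar p w a j \<in> {t0<..<t_end p J' t0} \<and>
              (\<exists>r. 1 \<le> r \<and> r \<le> m_card p w J' t0 a \<and> cseq p w J' t0 a r = c_val p w a j)
      then (THE r. 1 \<le> r \<and> r \<le> m_card p w J' t0 a \<and> cseq p w J' t0 a r = c_val p w a j)
      else card J' + 1)"

end

theory Submission
  imports Defs "HOL-Library.Product_Lexorder"
begin

text \<open>Schedule Jl greedily from t_o, then \<alpha> at s, then Jr greedily from s + p \<alpha>; the greedy rule
  always picks a job whose pair (phi(t), phi(t + 1)) is lexicographically largest at the current
  time t. Whenever a schedule violates "i dominates j on I", the interval I contains a time at
  which i is ahead of j in this order; hence greedy sequences violate nothing.
  A violation across \<alpha> makes a job i after \<alpha> ahead of a job j of Jl at time s - p j. This is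
  impossible: j overtakes \<alpha> from s - p j on, because tstar(\<alpha>, j) + p j \<le> c_q \<le> s, while a job i
  of Jr stays weakly below \<alpha> until beyond s, since otherwise either c(\<alpha>, i) \<le> s, contradicting
  M(i) > q, or s lies in the banned interval [tstar(\<alpha>, i), tstar(\<alpha>, i) + p i).\<close>

text \<open>phi_gap p w i j t = (phi p w i t - phi p w j t) * p i * (p i + t) * p j * (p j + t) is affine
  in t, with slope w i * p j - w j * p i and root tstar p w i j.\<close>

definition phi_gap :: "('a \<Rightarrow> real) \<Rightarrow> ('a \<Rightarrow> real) \<Rightarrow> 'a \<Rightarrow> 'a \<Rightarrow> real \<Rightarrow> real" where
  "phi_gap p w i j t = w i * p j * (p j + t) - w j * p i * (p i + t)"

lemma phi_gap_swap: "phi_gap p w j i t = - phi_gap p w i j t"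
  by (simp add: phi_gap_def)

lemma phi_gap_shift:
  "phi_gap p w i j t = phi_gap p w i j t' + (w i * p j - w j * p i) * (t - t')"
  by (simp add: phi_gap_def algebra_simps)

lemma phi_gap_tstar:
  assumes "w i * p j \<noteq> w j * p i"
  shows "phi_gap p w i j t = (w i * p j - w j * p i) * (t - tstar p w i j)"
  using assms by (simp add: phi_gap_def tstar_def field_simps power2_eq_square)

lemma tstar_commute: "tstar p w i j = tstar p w j i"
proof -
  have "(w j * (p i)\<^sup>2 - w i * (p j)\<^sup>2) / (w i * p j - w j * p i)
      = (w i * (p j)\<^sup>2 - w j * (p i)\<^sup>2) / (w j * p i - w i * p j)"
    by (metis minus_diff_eq minus_divide_divide)
  then show ?thesis
    by (simp add: tstar_def)
qed

lemma phi_le_iff_phi_gap: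
  assumes "p i > 0" "p j > 0" "t \<ge> 0"
  shows "phi p w j t \<le> phi p w i t \<longleftrightarrow> 0 \<le> phi_gap p w i j t"
proof -
  have "p i * (p i + t) > 0" "p j * (p j + t) > 0"
    using assms by auto
  then show ?thesis
    by (simp add: phi_def phi_gap_def divide_le_eq le_divide_eq field_simps)
qed

lemma phi_less_iff_phi_gap:
  assumes "p i > 0" "p j > 0" "t \<ge> 0"
  shows "phi p w j t < phi p w i t \<longleftrightarrow> 0 < phi_gap p w i j t"
  using phi_le_iff_phi_gap[of p j i t w] assms phi_gap_swap[of p w j i t] by linarith

lemma phi_gap_zero_imp_eq:
  assumes "phi_gap p w i j t = 0" "phi_gap p w i j t' = 0" "t \<noteq> t'"
    and "p i > 0" "w i > 0" "w j > 0"
  shows "p i = p j \<and> w i = w j"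
proof -
  have slope: "w i * p j = w j * p i"
    using assms(1-3) phi_gap_shift[of p w i j t t'] by simp
  then have "w i * p j * p j = w i * p j * p i"
    using assms(1) by (simp add: phi_gap_def algebra_simps)
  moreover have "w i * p j \<noteq> 0"
    using slope assms(4,6) by simp
  ultimately have "p j = p i"
    by simp
  with slope assms(4) show ?thesis by simp
qed

text \<open>Since phi_gap is affine in t, job i is ahead of j at t iff phi i exceeds phi j on some
  interval (t, t + \<delta>).\<close>

definition ahead :: "('a \<Rightarrow> real) \<Rightarrow> ('a \<Rightarrow> real) \<Rightarrow> 'a \<Rightarrow> 'a \<Rightarrow> real \<Rightarrow> bool" where
  "ahead p w i j t \<longleftrightarrow> (phi p w j t, phi p w j (t + 1)) < (phi p w i t, phi p w i (t + 1))"

lemma ahead_iff_phi_gap: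
  assumes "p i > 0" "p j > 0" "t \<ge> 0"
  shows "ahead p w i j t \<longleftrightarrow>
    0 < phi_gap p w i j t \<or> (phi_gap p w i j t = 0 \<and> 0 < phi_gap p w i j (t + 1))"
proof -
  have eq: "phi p w j t = phi p w i t \<longleftrightarrow> phi_gap p w i j t = 0"
    using phi_le_iff_phi_gap[of p i j t w] phi_le_iff_phi_gap[of p j i t w] assms
      phi_gap_swap[of p w j i t] by auto
  have "phi p w j t < phi p w i t \<longleftrightarrow> 0 < phi_gap p w i j t"
    by (rule phi_less_iff_phi_gap) (use assms in auto)
  moreover have "phi p w j (t + 1) < phi p w i (t + 1) \<longleftrightarrow> 0 < phi_gap p w i j (t + 1)"
    by (rule phi_less_iff_phi_gap) (use assms in auto)
  ultimately show ?thesis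
    unfolding ahead_def less_prod_def' by (simp add: eq)
qed

lemma not_ahead_if_le:
  assumes "p i > 0" "p j > 0" "0 \<le> t" "t < t'"
    and "phi p w i t \<le> phi p w j t" "phi p w i t' \<le> phi p w j t'"
  shows "\<not> ahead p w i j t"
proof
  assume "ahead p w i j t"
  moreover have "phi_gap p w i j t \<le> 0" "phi_gap p w i j t' \<le> 0"
    using assms phi_le_iff_phi_gap[of p j i _ w] phi_gap_swap[of p w j i] by auto
  ultimately have "phi_gap p w i j t = 0" "0 < w i * p j - w j * p i"
    using ahead_iff_phi_gap[of p i j t w] phi_gap_shift[of p w i j "t + 1" t] assms(1-3)
    by auto
  then show False
    using phi_gap_shift[of p w i j t' t] \<open>phi_gap p w i j t' \<le> 0\<close> \<open>t < t'\<close>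
      mult_pos_pos[of "w i * p j - w j * p i" "t' - t"] by linarith
qed

lemma rule_dom_convex:
  assumes "rule_dom p w J i j I" "a \<in> I" "b \<in> I" "a \<le> t" "t \<le> b"
  shows "t \<in> I"
  using assms unfolding rule_dom_def by auto

lemma ahead_if_phi_le_everywhere:
  assumes "\<forall>t\<ge>0. phi p w j t \<le> phi p w i t" "(p i, w i) \<noteq> (p j, w j)"
    and "p i > 0" "p j > 0" "w i > 0" "w j > 0" "0 \<le> t"
  shows "ahead p w i j t"
proof -
  have "0 \<le> phi_gap p w i j t" "0 \<le> phi_gap p w i j (t + 1)"
    using assms(1,3,4,7) phi_le_iff_phi_gap[of p i j t w] phi_le_iff_phi_gap[of p i j "t + 1" w]
    by simp_all
  moreover have "phi_gap p w i j t \<noteq> 0 \<or> phi_gap p w i j (t + 1) \<noteq> 0"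
    using phi_gap_zero_imp_eq[of p w i j t "t + 1"] assms(2-6) by auto
  ultimately show ?thesis
    using ahead_iff_phi_gap[of p i j t w] assms(3,4,7) by linarith
qed

lemma ahead_before_crossing:
  assumes "phi p w i t1 < phi p w j t1" "0 \<le> t1" "phi p w j 0 < phi p w i 0"
    and "0 \<le> t" "t < tstar p w i j" "p i > 0" "p j > 0"
  shows "ahead p w i j t"
proof -
  have "phi_gap p w i j t1 < 0"
    using assms(1,2,6,7) phi_le_iff_phi_gap[of p i j t1 w] by simp
  moreover have "0 < phi_gap p w i j 0"
    using assms(3,6,7) phi_less_iff_phi_gap[of p i j 0 w] by simp
  ultimately have "(w i * p j - w j * p i) * t1 < 0"
    using phi_gap_shift[of p w i j t1 0] by simp
  then have "w i * p j - w j * p i < 0"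
    using \<open>0 \<le> t1\<close> by (simp add: mult_less_0_iff)
  then have "0 < phi_gap p w i j t"
    using phi_gap_tstar[of w i p j t] \<open>t < tstar p w i j\<close> by (simp add: mult_neg_neg)
  then show ?thesis
    using ahead_iff_phi_gap[of p i j t w] assms(4,6,7) by simp
qed

lemma ahead_after_crossing:
  assumes "phi p w j t1 < phi p w i t1" "0 \<le> t1" "phi p w i 0 < phi p w j 0"
    and "0 \<le> t" "tstar p w i j \<le> t" "p i > 0" "p j > 0"
  shows "ahead p w i j t"
proof -
  have "0 < phi_gap p w i j t1"
    using assms(1,2,6,7) phi_less_iff_phi_gap[of p i j t1 w] by simp
  moreover have "phi_gap p w i j 0 < 0"
    using assms(3,6,7) phi_le_iff_phi_gap[of p i j 0 w] by simp
  ultimately have "0 < (w i * p j - w j * p i) * t1"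
    using phi_gap_shift[of p w i j t1 0] by simp
  then have "0 < w i * p j - w j * p i"
    using \<open>0 \<le> t1\<close> by (simp add: zero_less_mult_iff)
  then have "0 \<le> phi_gap p w i j t" "0 < phi_gap p w i j (t + 1)"
    using phi_gap_tstar[of w i p j] \<open>tstar p w i j \<le> t\<close> by auto
  then show ?thesis
    using ahead_iff_phi_gap[of p i j t w] assms(4,6,7) by auto
qed

lemma rule_dom_ahead:
  assumes rd: "rule_dom p w J i j I" and "t \<in> I" "0 \<le> t"
    and p_pos: "\<And>j. j \<in> J \<Longrightarrow> p j > 0" and w_pos: "\<And>j. j \<in> J \<Longrightarrow> w j > 0"
  shows "ahead p w i j t"
proof -
  have pos: "p i > 0" "p j > 0" "w i > 0" "w j > 0"
    using rd p_pos w_pos unfolding rule_dom_def by auto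
  consider (always) "\<forall>t\<ge>0. phi p w j t \<le> phi p w i t" "(p i, w i) \<noteq> (p j, w j)"
    | (before) "\<not> (\<forall>t\<ge>0. phi p w j t \<le> phi p w i t)" "phi p w j 0 < phi p w i 0"
        "I = {0..<tstar p w i j}"
    | (after) "\<not> (\<forall>t\<ge>0. phi p w i t \<le> phi p w j t)" "phi p w i 0 < phi p w j 0"
        "I = {tstar p w j i..}"
    using rd unfolding rule_dom_def by blast
  then show ?thesis
  proof cases
    case always
    show ?thesis
      by (rule ahead_if_phi_le_everywhere[OF always pos \<open>0 \<le> t\<close>])
  next
    case before
    then obtain t1 where "0 \<le> t1" "phi p w i t1 < phi p w j t1"
      by (auto simp: not_le)
    with before show ?thesis
      using ahead_before_crossing[of p w i t1 j t] pos assms(2,3) by simp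
  next
    case after
    then obtain t1 where "0 \<le> t1" "phi p w j t1 < phi p w i t1"
      by (auto simp: not_le)
    with after show ?thesis
      using ahead_after_crossing[of p w j t1 i t] pos assms(2,3) tstar_commute[of p w i j] by simp
  qed
qed

lemma start_at_append_prefix:
  "k \<le> length xs \<Longrightarrow> start_at p t0 (xs @ ys) k = start_at p t0 xs k"
  by (simp add: start_at_def)

lemma start_at_append:
  "start_at p t0 (xs @ ys) (length xs + k) = start_at p (t0 + sum_list (map p xs)) ys k"
  by (simp add: start_at_def)

lemma start_at_ge:
  assumes "\<forall>x\<in>set xs. 0 \<le> p x"
  shows "t0 \<le> start_at p t0 xs k"
  using assms unfolding start_at_def by (auto intro!: sum_list_nonneg dest!: in_set_takeD)

lemma start_at_add_le:
  assumes "k < length xs" "\<forall>x\<in>set xs. 0 \<le> p x"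
  shows "start_at p t0 xs k + p (xs ! k) \<le> t0 + sum_list (map p xs)"
proof -
  have "xs = take k xs @ xs ! k # drop (Suc k) xs"
    using assms(1) by (simp add: id_take_nth_drop)
  then have "sum_list (map p xs)
      = sum_list (map p (take k xs)) + p (xs ! k) + sum_list (map p (drop (Suc k) xs))"
    by (metis add.assoc list.map(2) map_append sum_list.Cons sum_list_append)
  moreover have "0 \<le> sum_list (map p (drop (Suc k) xs))"
    using assms(2) by (intro sum_list_nonneg) (auto dest: in_set_dropD)
  ultimately show ?thesis
    by (simp add: start_at_def)
qed

lemma violates_append_cases:
  assumes "violates p t0 (xs @ ys) i j I" and nonneg: "\<forall>x\<in>set (xs @ ys). 0 \<le> p x"
  obtains "violates p t0 xs i j I"
  | "violates p (t0 + sum_list (map p xs)) ys i j I"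
  | tj ti where "j \<in> set xs" "i \<in> set ys" "t0 \<le> tj" "tj \<le> t0 + sum_list (map p xs) - p j"
      "t0 + sum_list (map p xs) \<le> ti" "tj \<in> I" "ti - p j \<in> I"
proof -
  define n where "n = length xs"
  obtain k l where kl: "k < l" "l < length (xs @ ys)" "(xs @ ys) ! k = j" "(xs @ ys) ! l = i"
    and I: "start_at p t0 (xs @ ys) k \<in> I" "start_at p t0 (xs @ ys) l - p j \<in> I"
    using assms(1) unfolding violates_def by blast
  consider "l < n" | "n \<le> k" | "k < n" "n \<le> l"
    by linarith
  then show thesis
  proof cases
    case 1
    then have "violates p t0 xs i j I"
      using kl I unfolding violates_def n_def
      by (intro exI[of _ k] exI[of _ l]) (simp add: nth_append start_at_append_prefix)
    then show thesis by (fact that(1))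
  next
    case 2
    then obtain k' l' where "k = n + k'" "l = n + l'"
      using kl(1) by (metis le_Suc_ex less_imp_le order.trans)
    then have "violates p (t0 + sum_list (map p xs)) ys i j I"
      using kl I unfolding violates_def n_def
      by (intro exI[of _ k'] exI[of _ l']) (simp add: nth_append start_at_append)
    then show thesis by (fact that(2))
  next
    case 3
    obtain l' where l': "l = n + l'"
      using 3(2) le_Suc_ex by blast
    have "j \<in> set xs" "xs ! k = j"
      using 3(1) kl(3) unfolding n_def by (auto simp: nth_append)
    moreover have "i \<in> set ys"
      using kl(2,4) l' unfolding n_def by (auto simp: nth_append)
    moreover have "t0 \<le> start_at p t0 xs k"
      using nonneg by (intro start_at_ge) simp
    moreover have "start_at p t0 xs k \<le> t0 + sum_list (map p xs) - p j"
      using start_at_add_le[of k xs p t0] 3(1) nonneg \<open>xs ! k = j\<close> unfolding n_def by simp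
    moreover have "t0 + sum_list (map p xs) \<le> start_at p (t0 + sum_list (map p xs)) ys l'"
      using nonneg by (intro start_at_ge) simp
    ultimately show thesis
      using that(3) I 3(1) l' unfolding n_def
      by (simp add: start_at_append_prefix start_at_append)
  qed
qed

definition violation_free :: "('a \<Rightarrow> real) \<Rightarrow> ('a \<Rightarrow> real) \<Rightarrow> 'a set \<Rightarrow> real \<Rightarrow> 'a list \<Rightarrow> bool" where
  "violation_free p w J t0 \<sigma> \<longleftrightarrow> (\<forall>i j I. rule_dom p w J i j I \<longrightarrow> \<not> violates p t0 \<sigma> i j I)"

lemma violation_free_singleton: "violation_free p w J t0 [x]"
  unfolding violation_free_def violates_def by auto

lemma violation_free_append:
  assumes p_pos: "\<And>j. j \<in> J \<Longrightarrow> p j > 0" and w_pos: "\<And>j. j \<in> J \<Longrightarrow> w j > 0"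
    and "0 \<le> t0" and "set (xs @ ys) \<subseteq> J"
    and "violation_free p w J t0 xs" "violation_free p w J (t0 + sum_list (map p xs)) ys"
    and cross: "\<And>i j. j \<in> set xs \<Longrightarrow> i \<in> set ys \<Longrightarrow> t0 \<le> t0 + sum_list (map p xs) - p j \<Longrightarrow>
      \<not> ahead p w i j (t0 + sum_list (map p xs) - p j)"
  shows "violation_free p w J t0 (xs @ ys)"
  unfolding violation_free_def
proof (intro allI impI notI)
  fix i j I
  assume rd: "rule_dom p w J i j I" and v: "violates p t0 (xs @ ys) i j I"
  define s where "s = t0 + sum_list (map p xs)"
  have "\<forall>x\<in>set (xs @ ys). 0 \<le> p x"
    using assms(4) p_pos by (auto intro: less_imp_le)
  with v show False
  proof (cases rule: violates_append_cases)
    case (3 tj ti)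
    have "p j > 0"
      using rd p_pos unfolding rule_dom_def by blast
    then have "s - p j \<in> I"
      using rule_dom_convex[OF rd 3(6,7)] 3(4,5) unfolding s_def by simp
    then have "ahead p w i j (s - p j)"
      using rule_dom_ahead[OF rd _ _ p_pos w_pos] 3(3,4) \<open>0 \<le> t0\<close> unfolding s_def by simp
    with cross 3 show False
      unfolding s_def by simp
  qed (use assms(5,6) rd in \<open>auto simp: violation_free_def\<close>)
qed

lemma violation_free_Cons:
  assumes p_pos: "\<And>j. j \<in> J \<Longrightarrow> p j > 0" and w_pos: "\<And>j. j \<in> J \<Longrightarrow> w j > 0"
    and "0 \<le> t0" and "set (x # xs) \<subseteq> J"
    and "violation_free p w J (t0 + p x) xs" and "\<And>i. i \<in> set xs \<Longrightarrow> \<not> ahead p w i x t0"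
  shows "violation_free p w J t0 (x # xs)"
proof -
  have "violation_free p w J t0 ([x] @ xs)"
    by (rule violation_free_append[of J p w]) (use assms violation_free_singleton in auto)
  then show ?thesis
    by simp
qed

lemma exists_violation_free_schedule:
  assumes p_pos: "\<And>j. j \<in> J \<Longrightarrow> p j > 0" and w_pos: "\<And>j. j \<in> J \<Longrightarrow> w j > 0"
    and "finite S" "S \<subseteq> J" "0 \<le> t0"
  shows "\<exists>\<sigma>. distinct \<sigma> \<and> set \<sigma> = S \<and> violation_free p w J t0 \<sigma>"
  using assms(3-5)
proof (induction "card S" arbitrary: S t0 rule: less_induct)
  case less
  show ?case
  proof (cases "S = {}")
    case True
    then show ?thesis
      by (intro exI[of _ "[]"]) (simp add: violation_free_def violates_def)
  next
    case False
    define key where "key i = (phi p w i t0, phi p w i (t0 + 1))" for i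
    have "Max (key ` S) \<in> key ` S"
      using less.prems(1) False by simp
    then obtain x where x: "x \<in> S" "key x = Max (key ` S)"
      by (metis imageE)
    have x_max: "\<not> ahead p w i x t0" if "i \<in> S" for i
    proof -
      have "key i \<le> key x"
        using that x less.prems(1) by simp
      then show ?thesis
        unfolding ahead_def key_def by (simp only: not_less)
    qed
    have "card (S - {x}) < card S"
      using less.prems(1) x(1) by (rule card_Diff1_less)
    moreover have "0 \<le> t0 + p x"
      using less.prems x(1) p_pos[of x] by auto
    ultimately obtain \<sigma> where \<sigma>: "distinct \<sigma>" "set \<sigma> = S - {x}" "violation_free p w J (t0 + p x) \<sigma>"
      using less.hyps[of "S - {x}" "t0 + p x"] less.prems by auto
    have "violation_free p w J t0 (x # \<sigma>)"
      by (rule violation_free_Cons[of J p w]) (use p_pos w_pos less.prems \<sigma> x x_max in auto)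
    then show ?thesis
      using \<sigma> x(1) by (intro exI[of _ "x # \<sigma>"]) auto
  qed
qed

lemma violation_free_imp_partial_potential_schedule:
  "distinct \<sigma> \<Longrightarrow> set \<sigma> = J' \<Longrightarrow> violation_free p w J t0 \<sigma> \<Longrightarrow>
    partial_potential_schedule p w J J' t0 \<sigma>"
  unfolding partial_potential_schedule_def partial_schedule_def violation_free_def by blast

lemma before_append_Cons_left: "j \<in> set xs \<Longrightarrow> before (xs @ a # ys) j a"
proof -
  assume "j \<in> set xs"
  then obtain k where "k < length xs" "xs ! k = j"
    by (metis in_set_conv_nth)
  then show ?thesis
    unfolding before_def by (intro exI[of _ k] exI[of _ "length xs"]) (simp add: nth_append)
qed

lemma before_append_Cons_right: "i \<in> set ys \<Longrightarrow> before (xs @ a # ys) a i"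
proof -
  assume "i \<in> set ys"
  then obtain k where "k < length ys" "ys ! k = i"
    by (metis in_set_conv_nth)
  then show ?thesis
    unfolding before_def
    by (intro exI[of _ "length xs"] exI[of _ "Suc (length xs + k)"]) (simp add: nth_append)
qed

lemma sorted_list_of_set_nth_less:
  fixes A :: "'b::linorder set"
  assumes "finite A" "i < j" "j < card A"
  shows "sorted_list_of_set A ! i < sorted_list_of_set A ! j"
  using sorted_wrt_nth_less[OF strict_sorted_list_of_set, of i j A] assms
  by simp

lemma sorted_list_of_set_nth_mem:
  fixes A :: "'b::linorder set"
  assumes "finite A" "i < card A"
  shows "sorted_list_of_set A ! i \<in> A"
  using nth_mem[of i "sorted_list_of_set A"] assms by simp

lemma obtain_sorted_list_of_set_index:
  fixes A :: "'b::linorder set"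
  assumes "finite A" "x \<in> A"
  obtains i where "i < card A" "sorted_list_of_set A ! i = x"
  using assms by (metis in_set_conv_nth length_sorted_list_of_set set_sorted_list_of_set)

locale subproblem =
  fixes p w :: "'a \<Rightarrow> real" and J J' :: "'a set" and t0 :: real and \<alpha> :: 'a
  assumes finite_J: "finite J"
    and p_pos: "\<And>j. j \<in> J \<Longrightarrow> p j > 0" and w_pos: "\<And>j. j \<in> J \<Longrightarrow> w j > 0"
    and J'_subset: "J' \<subseteq> J" and J'_nonempty: "J' \<noteq> {}"
    and t0_nonneg: "0 \<le> t0" and t0_le: "t0 \<le> sum p J - sum p J'"
    and alpha: "is_alpha p w J' t0 \<alpha>"
begin

abbreviation "t_e \<equiv> t_end p J' t0"
abbreviation "C \<equiv> Cset p w J' t0 \<alpha>"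
abbreviation "m \<equiv> m_card p w J' t0 \<alpha>"
abbreviation "c \<equiv> cseq p w J' t0 \<alpha>"
abbreviation "M \<equiv> Mfun p w J' t0 \<alpha>"
abbreviation "slope j \<equiv> w \<alpha> * p j - w j * p \<alpha>"

lemma finite_J': "finite J'"
  using finite_J J'_subset by (rule finite_subset[rotated])

lemma alpha_in_J': "\<alpha> \<in> J'"
  using alpha unfolding is_alpha_def by blast

lemma p_pos_J': "j \<in> J' \<Longrightarrow> 0 < p j"
  using p_pos J'_subset by blast

lemma t0_less_t_e: "t0 < t_e"
proof -
  have "0 < sum p J'"
    using finite_J' J'_nonempty p_pos_J' by (intro sum_pos) auto
  then show ?thesis
    by (simp add: t_end_def)
qed

lemma t_e_le_sum_J: "t_e \<le> sum p J"
  using t0_le by (simp add: t_end_def)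

lemma alpha_phi_gap_nonneg:
  assumes "i \<in> J'"
  shows "0 \<le> phi_gap p w \<alpha> i t0"
  using alpha assms phi_le_iff_phi_gap[of p \<alpha> i t0 w] p_pos_J' alpha_in_J' t0_nonneg
  unfolding is_alpha_def by auto

lemma alpha_phi_gap_tie:
  assumes "i \<in> J'" "phi_gap p w \<alpha> i t0 = 0"
  shows "0 \<le> phi_gap p w \<alpha> i t_e"
proof -
  have pos: "0 < p i" "0 < p \<alpha>"
    using assms(1) alpha_in_J' p_pos_J' by auto
  have "phi p w i t0 = phi p w \<alpha> t0"
    using assms(2) phi_le_iff_phi_gap[of p \<alpha> i t0 w] phi_le_iff_phi_gap[of p i \<alpha> t0 w]
      phi_gap_swap[of p w i \<alpha> t0] pos t0_nonneg by auto
  then have "phi p w i t_e \<le> phi p w \<alpha> t_e"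
    using alpha assms(1) unfolding is_alpha_def by auto
  then show ?thesis
    using phi_le_iff_phi_gap[of p \<alpha> i t_e w] pos t0_nonneg t0_less_t_e by simp
qed

lemma slope_neg_iff:
  assumes "i \<in> J'" "slope i \<noteq> 0"
  shows "slope i < 0 \<longleftrightarrow> t0 < tstar p w \<alpha> i"
proof -
  have gap: "phi_gap p w \<alpha> i t = slope i * (t - tstar p w \<alpha> i)" for t
    using phi_gap_tstar assms(2) by simp
  have nonneg: "0 \<le> slope i * (t0 - tstar p w \<alpha> i)"
    using alpha_phi_gap_nonneg[OF assms(1)] gap by simp
  show ?thesis
  proof
    assume neg: "slope i < 0"
    then have "t0 \<le> tstar p w \<alpha> i"
      using nonneg by (simp add: mult_le_0_iff zero_le_mult_iff)
    moreover have "t0 \<noteq> tstar p w \<alpha> i"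
    proof
      assume "t0 = tstar p w \<alpha> i"
      then have "0 \<le> slope i * (t_e - t0)"
        using alpha_phi_gap_tie[OF assms(1)] gap by simp
      then show False
        using neg t0_less_t_e by (simp add: zero_le_mult_iff)
    qed
    ultimately show "t0 < tstar p w \<alpha> i"
      by simp
  next
    assume "t0 < tstar p w \<alpha> i"
    then show "slope i < 0"
      using nonneg assms(2) by (simp add: zero_le_mult_iff)
  qed
qed

lemma Cset_subset: "C \<subseteq> {t0..t_e}"
  using t0_less_t_e unfolding Cset_def by auto

lemma finite_Cset: "finite C"
proof -
  have "C \<subseteq> c_val p w \<alpha> ` J' \<union> {t0, t_e}"
    unfolding Cset_def by auto
  then show ?thesis
    by (rule finite_subset) (simp add: finite_J')
qed

lemma m_le_card_J': "m \<le> card J' + 1"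
proof -
  have "C \<subseteq> c_val p w \<alpha> ` (J' - {\<alpha>}) \<union> {t0, t_e}"
    unfolding Cset_def by auto
  then have "m \<le> card (c_val p w \<alpha> ` (J' - {\<alpha>}) \<union> {t0, t_e})"
    unfolding m_card_def using finite_J' by (intro card_mono) auto
  also have "\<dots> \<le> card (c_val p w \<alpha> ` (J' - {\<alpha>})) + card {t0, t_e}"
    by (rule card_Un_le)
  also have "\<dots> \<le> card (J' - {\<alpha>}) + 2"
    by (intro add_mono card_image_le) (auto simp: finite_J' card_insert_le_m1)
  also have "\<dots> = card J' + 1"
    using alpha_in_J' finite_J' card_gt_0_iff[of J'] by auto
  finally show ?thesis .
qed

lemma cseq_in_Cset: "1 \<le> r \<Longrightarrow> r \<le> m \<Longrightarrow> c r \<in> C"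
  unfolding cseq_def m_card_def using finite_Cset by (simp add: sorted_list_of_set_nth_mem)

lemma cseq_less: "1 \<le> r \<Longrightarrow> r < r' \<Longrightarrow> r' \<le> m \<Longrightarrow> c r < c r'"
  unfolding cseq_def m_card_def using finite_Cset by (simp add: sorted_list_of_set_nth_less)

lemma obtain_cseq_index:
  assumes "x \<in> C"
  obtains r where "1 \<le> r" "r \<le> m" "c r = x"
proof -
  obtain i where "i < m" "sorted_list_of_set C ! i = x"
    using obtain_sorted_list_of_set_index[OF finite_Cset assms] unfolding m_card_def .
  then show thesis
    using that[of "Suc i"] unfolding cseq_def by simp
qed

lemma Mfun_eqI:
  assumes "j \<noteq> \<alpha>" "slope j \<noteq> 0" "tstar p w \<alpha> j \<in> {t0<..<t_e}"
    and "1 \<le> r" "r \<le> m" "c r = c_val p w \<alpha> j"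
  shows "M j = r"
proof -
  have unique: "r' = r" if "1 \<le> r'" "r' \<le> m" "c r' = c_val p w \<alpha> j" for r'
    using cseq_less[of r r'] cseq_less[of r' r] assms(4-6) that by (cases r r' rule: linorder_cases) auto
  have "(THE r'. 1 \<le> r' \<and> r' \<le> m \<and> c r' = c_val p w \<alpha> j) = r"
    using assms(4-6) unique by blast
  then show ?thesis
    using assms unfolding Mfun_def tstar_defined_def by auto
qed

lemma Mfun_le_card_J':
  assumes "j \<noteq> \<alpha>" "M j \<le> card J'"
  shows "slope j \<noteq> 0 \<and> tstar p w \<alpha> j \<in> {t0<..<t_e} \<and>
    1 \<le> M j \<and> M j \<le> m \<and> c (M j) = c_val p w \<alpha> j"
proof -
  define P where "P \<longleftrightarrow> tstar_defined p w \<alpha> j \<and> tstar p w \<alpha> j \<in> {t0<..<t_e} \<and>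
    (\<exists>r. 1 \<le> r \<and> r \<le> m \<and> c r = c_val p w \<alpha> j)"
  have "P"
  proof (rule ccontr)
    assume "\<not> P"
    then have "M j = card J' + 1"
      by (simp only: Mfun_def if_not_P[OF assms(1)] P_def[symmetric] if_False)
    with assms(2) show False
      by simp
  qed
  then obtain r where "slope j \<noteq> 0" "tstar p w \<alpha> j \<in> {t0<..<t_e}" "1 \<le> r" "r \<le> m"
    "c r = c_val p w \<alpha> j"
    unfolding P_def tstar_defined_def by auto
  then show ?thesis
    using Mfun_eqI[OF assms(1)] by simp
qed

end

locale split_point = subproblem +
  fixes q :: nat and s :: real
  assumes q_ge_1: "1 \<le> q" and q_less_m: "q < m_card p w J' t0 \<alpha>"
    and cseq_q_le: "cseq p w J' t0 \<alpha> q \<le> s" and less_cseq_Suc_q: "s < cseq p w J' t0 \<alpha> (q + 1)"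
    and not_banned: "s \<notin> banned p w J \<alpha>"
begin

lemma t0_le_s: "t0 \<le> s"
  using cseq_in_Cset[of q] q_ge_1 q_less_m Cset_subset cseq_q_le by auto

lemma s_less_t_e: "s < t_e"
  using cseq_in_Cset[of "q + 1"] q_less_m Cset_subset less_cseq_Suc_q by auto

lemma Mfun_alpha: "M \<alpha> = 1"
  by (simp add: Mfun_def)

lemma left_job_overtakes_alpha:
  assumes "j \<in> J'" "j \<noteq> \<alpha>" "M j \<le> q" "s - p j \<le> t"
  shows "phi p w \<alpha> t \<le> phi p w j t"
proof -
  have M: "slope j \<noteq> 0" "t0 < tstar p w \<alpha> j" "1 \<le> M j" "c (M j) = c_val p w \<alpha> j"
    using Mfun_le_card_J'[OF assms(2)] assms(3) q_less_m m_le_card_J' by auto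
  have "slope j < 0"
    using slope_neg_iff[OF assms(1) M(1)] M(2) by simp
  moreover have "c_val p w \<alpha> j \<le> s"
    using cseq_less[of "M j" q] M(3,4) assms(3) q_less_m cseq_q_le by (cases "M j = q") auto
  then have "tstar p w \<alpha> j \<le> t"
    using assms(4) unfolding c_val_def by simp
  ultimately have "phi_gap p w \<alpha> j t \<le> 0"
    using phi_gap_tstar[of w \<alpha> p j t] M(1) by (simp add: mult_nonpos_nonneg)
  moreover have "0 \<le> t"
    using M(2) \<open>tstar p w \<alpha> j \<le> t\<close> t0_nonneg by simp
  ultimately show ?thesis
    using phi_le_iff_phi_gap[of p j \<alpha> t w] phi_gap_swap[of p w j \<alpha> t] p_pos_J' assms(1) alpha_in_J'
    by simp
qed

lemma right_job_s_less_c_val: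
  assumes "i \<in> J'" "q < M i" "slope i < 0" "tstar p w \<alpha> i \<le> s"
  shows "s < c_val p w \<alpha> i"
proof (rule ccontr)
  assume "\<not> s < c_val p w \<alpha> i"
  have "i \<noteq> \<alpha>"
    using assms(2) Mfun_alpha q_ge_1 by auto
  have "t0 < tstar p w \<alpha> i"
    using slope_neg_iff[OF assms(1)] assms(3) by simp
  then have "c_val p w \<alpha> i \<in> C"
    using \<open>\<not> s < c_val p w \<alpha> i\<close> \<open>i \<noteq> \<alpha>\<close> assms(1,3) p_pos_J' s_less_t_e
    unfolding Cset_def c_val_def tstar_defined_def by fastforce
  then obtain r where r: "1 \<le> r" "r \<le> m" "c r = c_val p w \<alpha> i"
    by (rule obtain_cseq_index)
  have "M i = r"
    using Mfun_eqI[OF \<open>i \<noteq> \<alpha>\<close> _ _ r] assms(3,4) \<open>t0 < tstar p w \<alpha> i\<close> s_less_t_e by simp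
  have "c r < c (q + 1)"
    using r(3) \<open>\<not> s < c_val p w \<alpha> i\<close> less_cseq_Suc_q by simp
  then have "\<not> q + 1 < r" "r \<noteq> q + 1"
    using cseq_less[of "q + 1" r] r(2) by auto
  with \<open>M i = r\<close> assms(2) show False
    by simp
qed

lemma right_job_s_less_tstar:
  assumes "i \<in> J'" "q < M i" "slope i < 0"
  shows "s < tstar p w \<alpha> i"
proof (rule ccontr)
  define ts where "ts = tstar p w \<alpha> i"
  assume "\<not> s < tstar p w \<alpha> i"
  then have "s \<in> {ts..<ts + p i}"
    using right_job_s_less_c_val[OF assms] unfolding ts_def c_val_def by simp
  have "i \<noteq> \<alpha>"
    using assms(2) Mfun_alpha q_ge_1 by auto
  have "t0 < ts"
    using slope_neg_iff[OF assms(1)] assms(3) unfolding ts_def by simp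
  then have "phi p w i 0 < phi p w \<alpha> 0"
    using phi_gap_tstar[of w \<alpha> p i 0] assms(3) t0_nonneg phi_less_iff_phi_gap[of p \<alpha> i 0 w]
      p_pos_J' assms(1) alpha_in_J' mult_neg_neg[of "slope i" "- ts"] unfolding ts_def by simp
  then have "{ts..<ts + p i} \<subseteq> banned p w J \<alpha>"
    using \<open>i \<noteq> \<alpha>\<close> assms(1,3) J'_subset \<open>t0 < ts\<close> t0_nonneg \<open>s \<in> {ts..<ts + p i}\<close> s_less_t_e
      t_e_le_sum_J
    unfolding banned_def ts_def by (intro Union_upper) fastforce
  with \<open>s \<in> {ts..<ts + p i}\<close> show False
    using not_banned by blast
qed

lemma right_job_below_alpha:
  assumes "i \<in> J'" "q < M i"
  obtains s' where "s < s'" "\<And>t. t0 \<le> t \<Longrightarrow> t \<le> s' \<Longrightarrow> phi p w i t \<le> phi p w \<alpha> t"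
proof -
  have gap_nonneg: "phi p w i t \<le> phi p w \<alpha> t" if "t0 \<le> t" "0 \<le> phi_gap p w \<alpha> i t" for t
    using that phi_le_iff_phi_gap[of p \<alpha> i t w] p_pos_J' assms(1) alpha_in_J' t0_nonneg by simp
  show thesis
  proof (cases "slope i < 0")
    case True
    define ts where "ts = tstar p w \<alpha> i"
    have "s < ts"
      using right_job_s_less_tstar[OF assms True] unfolding ts_def .
    moreover have "0 \<le> phi_gap p w \<alpha> i t" if "t \<le> ts" for t
      using phi_gap_tstar[of w \<alpha> p i t] True that unfolding ts_def by (simp add: mult_nonpos_nonpos)
    ultimately show thesis
      using that[of ts] gap_nonneg by simp
  next
    case False
    have "0 \<le> phi_gap p w \<alpha> i t" if "t0 \<le> t" for t
      using phi_gap_shift[of p w \<alpha> i t t0] alpha_phi_gap_nonneg[OF assms(1)] False that by simp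
    then show thesis
      using that[of "s + 1"] gap_nonneg by simp
  qed
qed

lemma right_job_not_ahead_alpha:
  assumes "i \<in> J'" "q < M i"
  shows "\<not> ahead p w i \<alpha> s"
proof -
  obtain s' where "s < s'" "\<And>t. t0 \<le> t \<Longrightarrow> t \<le> s' \<Longrightarrow> phi p w i t \<le> phi p w \<alpha> t"
    using right_job_below_alpha[OF assms] by blast
  then show ?thesis
    using not_ahead_if_le[of p i \<alpha> s s' w] p_pos_J' assms(1) alpha_in_J' t0_le_s t0_nonneg by simp
qed

lemma not_ahead_left_job:
  assumes "j \<in> J'" "j \<noteq> \<alpha>" "M j \<le> q" "i = \<alpha> \<or> i \<in> J' \<and> q < M i" "t0 \<le> s - p j"
  shows "\<not> ahead p w i j (s - p j)"
proof -
  have i_le_alpha: "phi p w i t \<le> phi p w \<alpha> t" if "t0 \<le> t" "t \<le> s" for t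
  proof (cases "i = \<alpha>")
    case False
    then obtain s' where "s < s'" "\<And>t. t0 \<le> t \<Longrightarrow> t \<le> s' \<Longrightarrow> phi p w i t \<le> phi p w \<alpha> t"
      using right_job_below_alpha assms(4) by blast
    then show ?thesis
      using that by simp
  qed simp
  have i_le_j: "phi p w i t \<le> phi p w j t" if "t0 \<le> t" "t \<le> s" "s - p j \<le> t" for t
    using i_le_alpha[OF that(1,2)] left_job_overtakes_alpha[OF assms(1-3) that(3)] by simp
  have "p i > 0" "p j > 0"
    using assms(1,4) alpha_in_J' p_pos_J' by auto
  then show ?thesis
    using not_ahead_if_le[of p i j "s - p j" s w] i_le_j[of "s - p j"] i_le_j[of s] assms(5) t0_le_s
      t0_nonneg by simp
qed

abbreviation "left_jobs \<equiv> {j \<in> J' - {\<alpha>}. M j \<le> q}"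
abbreviation "right_jobs \<equiv> {j \<in> J'. q < M j}"

lemma exists_pivot_schedule:
  assumes "s = t0 + sum p left_jobs"
  obtains \<sigma>l \<sigma>r where "set \<sigma>l = left_jobs" "set \<sigma>r = right_jobs" "distinct (\<sigma>l @ \<alpha> # \<sigma>r)"
    "set (\<sigma>l @ \<alpha> # \<sigma>r) = J'" "violation_free p w J t0 (\<sigma>l @ \<alpha> # \<sigma>r)"
    "t0 + sum_list (map p \<sigma>l) = s"
proof -
  have "finite left_jobs" "finite right_jobs" "0 \<le> s + p \<alpha>"
    using finite_J' t0_nonneg t0_le_s p_pos_J'[OF alpha_in_J'] by auto
  then obtain \<sigma>l \<sigma>r where
    \<sigma>l: "distinct \<sigma>l" "set \<sigma>l = left_jobs" "violation_free p w J t0 \<sigma>l" and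
    \<sigma>r: "distinct \<sigma>r" "set \<sigma>r = right_jobs" "violation_free p w J (s + p \<alpha>) \<sigma>r"
  proof -
    have "left_jobs \<subseteq> J" "right_jobs \<subseteq> J"
      using J'_subset by auto
    then show thesis
      using that exists_violation_free_schedule[of J p w, OF p_pos w_pos] \<open>finite left_jobs\<close>
        \<open>finite right_jobs\<close> t0_nonneg \<open>0 \<le> s + p \<alpha>\<close> by meson
  qed
  have start_\<alpha>: "t0 + sum_list (map p \<sigma>l) = s"
    using \<sigma>l assms by (simp add: sum_list_distinct_conv_sum_set)
  have sub: "set (\<sigma>l @ \<alpha> # \<sigma>r) \<subseteq> J"
    using \<sigma>l(2) \<sigma>r(2) alpha_in_J' J'_subset by auto
  have "violation_free p w J (t0 + sum_list (map p \<sigma>l)) (\<alpha> # \<sigma>r)"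
    using violation_free_Cons[of J p w, OF p_pos w_pos _ _ \<sigma>r(3)] sub t0_nonneg t0_le_s
      right_job_not_ahead_alpha \<sigma>r(2)
    unfolding start_\<alpha> by simp
  moreover have "\<not> ahead p w i j (t0 + sum_list (map p \<sigma>l) - p j)"
    if "j \<in> set \<sigma>l" "i \<in> set (\<alpha> # \<sigma>r)" "t0 \<le> t0 + sum_list (map p \<sigma>l) - p j" for i j
    using not_ahead_left_job[of j i] that \<sigma>l(2) \<sigma>r(2) unfolding start_\<alpha> by auto
  ultimately have "violation_free p w J t0 (\<sigma>l @ \<alpha> # \<sigma>r)"
    using violation_free_append[of J p w t0 \<sigma>l "\<alpha> # \<sigma>r", OF p_pos w_pos t0_nonneg sub \<sigma>l(3)]
    by blast
  moreover have "distinct (\<sigma>l @ \<alpha> # \<sigma>r)" "set (\<sigma>l @ \<alpha> # \<sigma>r) = J'"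
  proof -
    have "left_jobs \<inter> right_jobs = {}" "left_jobs \<union> insert \<alpha> right_jobs = J'"
      "\<alpha> \<notin> right_jobs"
      using alpha_in_J' Mfun_alpha q_ge_1 by auto
    then show "distinct (\<sigma>l @ \<alpha> # \<sigma>r)" "set (\<sigma>l @ \<alpha> # \<sigma>r) = J'"
      using \<sigma>l(1,2) \<sigma>r(1,2) by auto
  qed
  ultimately show thesis
    by (intro that[OF \<sigma>l(2) \<sigma>r(2)] start_\<alpha>)
qed

end

theorem lemma8:
  fixes J J' :: "'a set" and p w :: "'a \<Rightarrow> real" and t\<^sub>o s :: real and \<alpha> :: 'a and q :: nat
    and Jl Jr :: "'a set"
  assumes "finite J"
    and "\<And>j. j \<in> J \<Longrightarrow> p j > 0"
    and "\<And>j. j \<in> J \<Longrightarrow> w j > 0"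
    and "J' \<subseteq> J" and "J' \<noteq> {}"
    and "0 \<le> t\<^sub>o" and "t\<^sub>o \<le> sum p J - sum p J'"
    and "is_alpha p w J' t\<^sub>o \<alpha>"
    and "1 \<le> q" and "q < m_card p w J' t\<^sub>o \<alpha>"
    and "Jl = {j \<in> J' - {\<alpha>}. Mfun p w J' t\<^sub>o \<alpha> j \<le> q}"
    and "Jr = {j \<in> J'. Mfun p w J' t\<^sub>o \<alpha> j > q}"
    and "s = t\<^sub>o + sum p Jl"
    and "cseq p w J' t\<^sub>o \<alpha> q \<le> s" and "s < cseq p w J' t\<^sub>o \<alpha> (q + 1)"
    and "s \<notin> banned p w J \<alpha>"
  shows "\<exists>\<sigma>. partial_potential_schedule p w J J' t\<^sub>o \<sigma> \<and>
            (\<forall>j\<in>Jl. before \<sigma> j \<alpha>) \<and>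
            (\<exists>k<length \<sigma>. \<sigma> ! k = \<alpha> \<and> start_at p t\<^sub>o \<sigma> k = s) \<and>
            (\<forall>j\<in>Jr. before \<sigma> \<alpha> j)"
proof -
  interpret split_point p w J J' t\<^sub>o \<alpha> q s
    by unfold_locales (use assms in auto)
  obtain \<sigma>l \<sigma>r where \<sigma>: "set \<sigma>l = Jl" "set \<sigma>r = Jr" "distinct (\<sigma>l @ \<alpha> # \<sigma>r)"
    "set (\<sigma>l @ \<alpha> # \<sigma>r) = J'" "violation_free p w J t\<^sub>o (\<sigma>l @ \<alpha> # \<sigma>r)"
    "t\<^sub>o + sum_list (map p \<sigma>l) = s"
    using exists_pivot_schedule assms(13) unfolding assms(11,12) by blast
  have "start_at p t\<^sub>o (\<sigma>l @ \<alpha> # \<sigma>r) (length \<sigma>l) = s"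
    using \<sigma>(6) by (simp add: start_at_def)
  moreover have "\<forall>j\<in>Jl. before (\<sigma>l @ \<alpha> # \<sigma>r) j \<alpha>" "\<forall>j\<in>Jr. before (\<sigma>l @ \<alpha> # \<sigma>r) \<alpha> j"
    unfolding \<sigma>(1,2)[symmetric] by (auto intro: before_append_Cons_left before_append_Cons_right)
  ultimately show ?thesis
    using violation_free_imp_partial_potential_schedule[OF \<sigma>(3-5)]
    by (intro exI[of _ "\<sigma>l @ \<alpha> # \<sigma>r"] conjI exI[of _ "length \<sigma>l"]) simp_all
qed

end
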